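(* Let $X$ be a $C^1$ vector field on a smooth manifold $M$ and let $p_0\in M$ satisfy $X(p_0)=0$. If the linearization $DX(p_0)$ has an eigenvalue $\lambda$ with $\mathrm{Re}\,\lambda>0$, then there exists an open neighborhood $B\subset M$ of $p_0$ such that the set $E$ of points $p\in M$ for which the solution $\gamma$ of $\dot\gamma=X\circ\gamma$, $\gamma(0)=p$, is defined and satisfies $\gamma(t)\in B$ for all $t\in[0,+\infty)$ has measure zero.
   Context: Manifolds are Hausdorff, second countable and finite-dimensional. A subset $A\subset M$ has measure zero if for every chart $(V,\psi)$ the set $\psi(A\cap V)$ has Lebesgue measure zero. *)

theory Defs
  imports "HOL-Analysis.Analysis"
begin

type_synonym ('p, 'n) chart = "'p set \<times> ('p \<Rightarrow> real^'n)"

definition is_chart :: "'p topology \<Rightarrow> ('p, 'n::finite) chart \<Rightarrow> bool" where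
  "is_chart M c \<longleftrightarrow> openin M (fst c) \<and> open (snd c ` fst c) \<and>
     homeomorphic_map (subtopology M (fst c)) (top_of_set (snd c ` fst c)) (snd c)"

fun iter_dd :: "('a::real_normed_vector \<Rightarrow> 'b::real_normed_vector) \<Rightarrow> 'a list \<Rightarrow> 'a \<Rightarrow> 'b" where
  "iter_dd f [] = f"
| "iter_dd f (v # vs) = (\<lambda>x. frechet_derivative (iter_dd f vs) (at x) v)"

definition smooth_on :: "'a::real_normed_vector set \<Rightarrow> ('a \<Rightarrow> 'b::real_normed_vector) \<Rightarrow> bool" where
  "smooth_on S f \<longleftrightarrow> (\<forall>vs. \<forall>x\<in>S. iter_dd f vs differentiable (at x))"

definition C1_on :: "'a::real_normed_vector set \<Rightarrow> ('a \<Rightarrow> 'b::real_normed_vector) \<Rightarrow> bool" where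
  "C1_on S f \<longleftrightarrow> (\<exists>f'. (\<forall>x\<in>S. (f has_derivative blinfun_apply (f' x)) (at x)) \<and> continuous_on S f')"

text \<open>Transition map from chart c1 to chart c2 (meaningful on snd c1 ` (fst c1 \<inter> fst c2)).\<close>

definition transition :: "('p, 'n::finite) chart \<Rightarrow> ('p, 'n) chart \<Rightarrow> real^'n \<Rightarrow> real^'n" where
  "transition c1 c2 = snd c2 \<circ> inv_into (fst c1) (snd c1)"

definition smooth_compat :: "('p, 'n::finite) chart \<Rightarrow> ('p, 'n) chart \<Rightarrow> bool" where
  "smooth_compat c1 c2 \<longleftrightarrow>
     smooth_on (snd c1 ` (fst c1 \<inter> fst c2)) (transition c1 c2) \<and>
     smooth_on (snd c2 ` (fst c1 \<inter> fst c2)) (transition c2 c1)"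

text \<open>A smooth manifold of dimension CARD('n): a Hausdorff, second countable
  topological space M with a smooth atlas A.\<close>

definition smooth_manifold :: "'p topology \<Rightarrow> ('p, 'n::finite) chart set \<Rightarrow> bool" where
  "smooth_manifold M A \<longleftrightarrow> Hausdorff_space M \<and> second_countable M \<and>
     (\<forall>c\<in>A. is_chart M c) \<and> topspace M \<subseteq> (\<Union>c\<in>A. fst c) \<and>
     (\<forall>c1\<in>A. \<forall>c2\<in>A. smooth_compat c1 c2)"

text \<open>The charts of the smooth structure (the maximal atlas determined by A).\<close>

definition mchart :: "'p topology \<Rightarrow> ('p, 'n::finite) chart set \<Rightarrow> ('p, 'n) chart \<Rightarrow> bool" where
  "mchart M A c \<longleftrightarrow> is_chart M c \<and> (\<forall>a\<in>A. smooth_compat a c)"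

definition measure_zero :: "'p topology \<Rightarrow> ('p, 'n::finite) chart set \<Rightarrow> 'p set \<Rightarrow> bool" where
  "measure_zero M A E \<longleftrightarrow> (\<forall>c. mchart M A c \<longrightarrow> snd c ` (E \<inter> fst c) \<in> null_sets lebesgue)"

text \<open>A vector field is given by its local representatives X c in every chart c,
  transforming by the derivative of the transition maps. It is C^1 if every
  local representative is C^1.\<close>

definition C1_vector_field :: "'p topology \<Rightarrow> ('p, 'n::finite) chart set \<Rightarrow>
     (('p, 'n) chart \<Rightarrow> real^'n \<Rightarrow> real^'n) \<Rightarrow> bool" where
  "C1_vector_field M A X \<longleftrightarrow>
     (\<forall>c. mchart M A c \<longrightarrow> C1_on (snd c ` fst c) (X c)) \<and>
     (\<forall>c1 c2. mchart M A c1 \<longrightarrow> mchart M A c2 \<longrightarrow>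
        (\<forall>x\<in>snd c1 ` (fst c1 \<inter> fst c2).
           X c2 (transition c1 c2 x) = frechet_derivative (transition c1 c2) (at x) (X c1 x)))"

definition integral_curve :: "'p topology \<Rightarrow> ('p, 'n::finite) chart set \<Rightarrow>
     (('p, 'n) chart \<Rightarrow> real^'n \<Rightarrow> real^'n) \<Rightarrow> (real \<Rightarrow> 'p) \<Rightarrow> real set \<Rightarrow> bool" where
  "integral_curve M A X \<gamma> J \<longleftrightarrow>
     continuous_map (top_of_set J) M \<gamma> \<and>
     (\<forall>c. mchart M A c \<longrightarrow> (\<forall>t\<in>J. \<gamma> t \<in> fst c \<longrightarrow>
        ((snd c \<circ> \<gamma>) has_vector_derivative X c (snd c (\<gamma> t))) (at t within J)))"

definition complex_eigenvalue :: "(real^'n \<Rightarrow> real^'n) \<Rightarrow> complex \<Rightarrow> bool" where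
  "complex_eigenvalue L lam \<longleftrightarrow>
     (\<exists>v::complex^'n. v \<noteq> 0 \<and>
        (\<chi> i. \<Sum>j\<in>UNIV. complex_of_real (matrix L $ i $ j) * v $ j) = lam *s v)"

end

(*
  Work in a chart around p0 and let L be the derivative of the local representative f of X
  at p0. A complex Schur form of L with the eigenvalues ordered by decreasing real part,
  rescaled to be nearly diagonal, splits the coordinates at a level beta between 0 and the
  real part of the given eigenvalue. The difference F of the squared norms of the coordinates
  above and below beta is a quadratic form that is positive at some real vector and grows
  exponentially along w' = L w + rho whenever rho is small compared with w. Near p0, the
  difference of two solutions of x' = f x is of this kind, so if both stay in a small ball
  for all t >= 0 then F is nonpositive on the difference of their initial points. Such a set
  of initial points is a Lipschitz graph over a hyperplane, hence negligible, and smooth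
  transition maps carry this to every chart.
*)
theory Submission
  imports Defs "Jordan_Normal_Form.Schur_Decomposition"
begin

section \<open>Sets whose differences lie in a cone\<close>

lemma nonpos_homogeneous_far_from_ray:
  fixes F :: "'a::real_normed_vector \<Rightarrow> real"
  assumes pos: "\<And>u. dist u v < \<theta> \<Longrightarrow> F u > 0"
    and hom: "\<And>t w. F (t *\<^sub>R w) = t\<^sup>2 * F w"
    and "F (t *\<^sub>R v + h) \<le> 0"
  shows "\<theta> * \<bar>t\<bar> \<le> norm h"
proof (rule ccontr)
  assume less: "\<not> \<theta> * \<bar>t\<bar> \<le> norm h"
  then have "t \<noteq> 0"
    by auto
  have "dist (v + (1/t) *\<^sub>R h) v = norm h / \<bar>t\<bar>"
    by (simp add: dist_norm)
  also have "\<dots> < \<theta>"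
    using less \<open>t \<noteq> 0\<close> by (simp add: divide_less_eq mult.commute)
  finally have "F (v + (1/t) *\<^sub>R h) > 0"
    by (rule pos)
  then have "F (t *\<^sub>R (v + (1/t) *\<^sub>R h)) > 0"
    using \<open>t \<noteq> 0\<close> by (simp only: hom) simp
  then show False
    using assms(3) \<open>t \<noteq> 0\<close> by (simp add: scaleR_add_right)
qed

lemma norm_le_orthogonal_part_if_nonpos:
  fixes F :: "'a::real_inner \<Rightarrow> real"
  assumes "isCont F v" and "F v > 0"
    and hom: "\<And>t w. F (t *\<^sub>R w) = t\<^sup>2 * F w"
  obtains K where "\<And>d. F d \<le> 0 \<Longrightarrow> norm d \<le> K * norm (d - ((d \<bullet> v) / (v \<bullet> v)) *\<^sub>R v)"
proof -
  obtain \<theta> where "\<theta> > 0" and \<theta>: "\<And>u. dist u v < \<theta> \<Longrightarrow> dist (F u) (F v) < F v"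
    using assms(1,2) unfolding continuous_at_eps_delta by blast
  then have pos: "F u > 0" if "dist u v < \<theta>" for u
    using \<theta>[OF that] by (simp add: dist_real_def abs_less_iff)
  have "norm d \<le> (1 + norm v / \<theta>) * norm (d - ((d \<bullet> v) / (v \<bullet> v)) *\<^sub>R v)" if "F d \<le> 0" for d
  proof -
    define t where "t = (d \<bullet> v) / (v \<bullet> v)"
    define h where "h = d - t *\<^sub>R v"
    have "F (t *\<^sub>R v + h) \<le> 0"
      using \<open>F d \<le> 0\<close> by (simp add: h_def)
    with pos hom have "\<theta> * \<bar>t\<bar> \<le> norm h"
      by (rule nonpos_homogeneous_far_from_ray)
    have "norm d \<le> \<bar>t\<bar> * norm v + norm h"
      using norm_triangle_ineq[of "t *\<^sub>R v" h] by (simp add: h_def)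
    also have "\<bar>t\<bar> * norm v \<le> (norm h / \<theta>) * norm v"
      using \<open>\<theta> * \<bar>t\<bar> \<le> norm h\<close> \<open>\<theta> > 0\<close> by (intro mult_right_mono) (auto simp: field_simps)
    finally have "norm d \<le> (1 + norm v / \<theta>) * norm h"
      by (simp add: algebra_simps)
    then show ?thesis
      by (simp add: h_def t_def)
  qed
  then show ?thesis
    by (rule that)
qed

lemma negligible_if_differences_nonpos:
  fixes F :: "'a::euclidean_space \<Rightarrow> real"
  assumes "isCont F v" and "F v > 0"
    and "\<And>t w. F (t *\<^sub>R w) = t\<^sup>2 * F w"
    and nonpos: "\<And>x y. x \<in> S \<Longrightarrow> y \<in> S \<Longrightarrow> F (x - y) \<le> 0"
  shows "negligible S"
proof -
  obtain K where K: "\<And>d. F d \<le> 0 \<Longrightarrow> norm d \<le> K * norm (d - ((d \<bullet> v) / (v \<bullet> v)) *\<^sub>R v)"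
    using norm_le_orthogonal_part_if_nonpos assms(1-3) by blast
  define \<pi> where "\<pi> x = x - ((x \<bullet> v) / (v \<bullet> v)) *\<^sub>R v" for x
  have "v \<noteq> 0"
    using assms(2) assms(3)[of 0 v] by auto
  have lipschitz: "norm (x - y) \<le> K * norm (\<pi> x - \<pi> y)" if "x \<in> S" "y \<in> S" for x y
    using K[OF nonpos[OF that]]
    by (simp add: \<pi>_def inner_diff_left algebra_simps diff_divide_distrib)
  then have "inj_on \<pi> S"
    by (fastforce intro: inj_onI)
  have "negligible (\<pi> ` S)"
  proof (rule negligible_subset)
    show "negligible {z. v \<bullet> z = 0}"
      using \<open>v \<noteq> 0\<close> by (intro negligible_hyperplane) simp
    show "\<pi> ` S \<subseteq> {z. v \<bullet> z = 0}"
      using \<open>v \<noteq> 0\<close> by (auto simp: \<pi>_def inner_diff_right inner_commute)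
  qed
  then have "negligible (inv_into S \<pi> ` \<pi> ` S)"
  proof (rule negligible_locally_Lipschitz_image[OF order_refl])
    fix z assume "z \<in> \<pi> ` S"
    then show "\<exists>T B. open T \<and> z \<in> T \<and>
        (\<forall>y\<in>\<pi> ` S \<inter> T. norm (inv_into S \<pi> y - inv_into S \<pi> z) \<le> B * norm (y - z))"
      using lipschitz \<open>inj_on \<pi> S\<close> by (intro exI[of _ UNIV] exI[of _ K]) auto
  qed
  then show ?thesis
    using \<open>inj_on \<pi> S\<close> by simp
qed

section \<open>Solutions trapped in a bounded set\<close>

lemma nonpos_if_exponential_growth_bounded:
  fixes V V' :: "real \<Rightarrow> real"
  assumes der: "\<And>t. t \<ge> 0 \<Longrightarrow> (V has_real_derivative V' t) (at t within {0..})"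
    and growth: "\<And>t. t \<ge> 0 \<Longrightarrow> c * V t \<le> V' t" and "c > 0"
    and bounded: "\<And>t. t \<ge> 0 \<Longrightarrow> V t \<le> K"
  shows "V 0 \<le> 0"
proof (rule ccontr)
  assume "\<not> V 0 \<le> 0"
  define \<phi> where "\<phi> t = V t * exp (- c * t)" for t
  have \<phi>_der: "(\<phi> has_real_derivative (V' t - c * V t) * exp (- c * t)) (at t within {0..})"
    if "t \<ge> 0" for t
    unfolding \<phi>_def using der[OF that] by (auto intro!: derivative_eq_intros simp: algebra_simps)
  have \<phi>_mono: "\<phi> 0 \<le> \<phi> t" if "t \<ge> 0" for t
  proof (rule DERIV_nonneg_imp_increasing_open[OF that])
    fix x assume "0 < x" "x < t"
    then have "at x within {0..} = at x"
      by (intro at_within_interior) (simp add: interior_real_atLeast)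
    then show "\<exists>y. (\<phi> has_real_derivative y) (at x) \<and> 0 \<le> y"
      using \<phi>_der[of x] growth[of x] \<open>0 < x\<close> by auto
  next
    have "continuous_on {0..} \<phi>"
      using \<phi>_der by (auto simp: continuous_on_eq_continuous_within intro: DERIV_continuous)
    then show "continuous_on {0..t} \<phi>"
      by (rule continuous_on_subset) auto
  qed
  have "V 0 * exp (c * t) \<le> V t" if "t \<ge> 0" for t
  proof -
    have "V 0 * exp (c * t) \<le> \<phi> t * exp (c * t)"
      using \<phi>_mono[OF that] by (simp add: \<phi>_def)
    also have "\<dots> = V t"
      by (simp add: \<phi>_def mult.assoc flip: exp_add)
    finally show ?thesis .
  qed
  moreover have "V 0 * (1 + c * t) \<le> V 0 * exp (c * t)" for t
    using \<open>\<not> V 0 \<le> 0\<close> exp_ge_add_one_self[of "c * t"] by simp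
  ultimately have grow: "V 0 * (1 + c * t) \<le> K" if "t \<ge> 0" for t
    using bounded that by (meson order_trans)
  define T where "T = (\<bar>K\<bar> + 1) / (c * V 0)"
  have "T \<ge> 0" and T: "(c * V 0) * T = \<bar>K\<bar> + 1"
    using \<open>c > 0\<close> \<open>\<not> V 0 \<le> 0\<close> by (simp_all add: T_def)
  have "V 0 + (c * V 0) * T \<le> K"
    using grow[OF \<open>T \<ge> 0\<close>] by (simp add: algebra_simps)
  then show False
    using T \<open>\<not> V 0 \<le> 0\<close> by linarith
qed

lemma remainder_bound_if_derivative_close:
  fixes f :: "'a::real_normed_vector \<Rightarrow> 'b::real_normed_vector"
  assumes "convex S"
    and der: "\<And>y. y \<in> S \<Longrightarrow> (f has_derivative blinfun_apply (f' y)) (at y within S)"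
    and close: "\<And>y. y \<in> S \<Longrightarrow> norm (f' y - L) \<le> \<eta>"
    and "x \<in> S" "z \<in> S"
  shows "norm (f x - f z - blinfun_apply L (x - z)) \<le> \<eta> * norm (x - z)"
proof -
  have "((\<lambda>x. f x - blinfun_apply L x) has_derivative blinfun_apply (f' y - L)) (at y within S)"
    if "y \<in> S" for y
    using der[OF that] by (auto intro!: derivative_eq_intros simp: blinfun.diff_left)
  moreover have "onorm (blinfun_apply (f' y - L)) \<le> \<eta>" if "y \<in> S" for y
    using close[OF that] by (simp add: norm_blinfun.rep_eq)
  ultimately have "norm ((f x - blinfun_apply L x) - (f z - blinfun_apply L z)) \<le> \<eta> * norm (x - z)"
    by (rule differentiable_bound[OF \<open>convex S\<close> _ _ \<open>x \<in> S\<close> \<open>z \<in> S\<close>])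
  then show ?thesis
    by (simp add: blinfun.diff_right algebra_simps)
qed

definition trapped_initial_points :: "('a::real_normed_vector \<Rightarrow> 'a) \<Rightarrow> 'a set \<Rightarrow> 'a set" where
  "trapped_initial_points f S =
     {\<xi> 0 | \<xi>. \<forall>t\<ge>0. \<xi> t \<in> S \<and> (\<xi> has_vector_derivative f (\<xi> t)) (at t within {0..})}"

lemma trapped_initial_points_difference_nonpos:
  fixes F :: "'a::real_normed_vector \<Rightarrow> real"
  assumes F_der: "\<And>w. (F has_derivative F' w) (at w)"
    and expanding: "\<And>w \<rho>. norm \<rho> \<le> \<eta> * norm w \<Longrightarrow> c * F w \<le> F' w (L w + \<rho>)"
    and "c > 0" and F_le: "\<And>w. F w \<le> K * (norm w)\<^sup>2"
    and remainder: "\<And>x z. x \<in> S \<Longrightarrow> z \<in> S \<Longrightarrow> norm (f x - f z - L (x - z)) \<le> \<eta> * norm (x - z)"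
    and "bounded S"
    and "x \<in> trapped_initial_points f S" "z \<in> trapped_initial_points f S"
  shows "F (x - z) \<le> 0"
proof -
  obtain \<xi>1 \<xi>2 where "x = \<xi>1 0" "z = \<xi>2 0"
    and \<xi>1: "\<And>t. t \<ge> 0 \<Longrightarrow> \<xi>1 t \<in> S \<and> (\<xi>1 has_vector_derivative f (\<xi>1 t)) (at t within {0..})"
    and \<xi>2: "\<And>t. t \<ge> 0 \<Longrightarrow> \<xi>2 t \<in> S \<and> (\<xi>2 has_vector_derivative f (\<xi>2 t)) (at t within {0..})"
    using assms(7,8) unfolding trapped_initial_points_def by blast
  define w where "w t = \<xi>1 t - \<xi>2 t" for t
  define w' where "w' t = f (\<xi>1 t) - f (\<xi>2 t)" for t
  have "((F \<circ> w) has_real_derivative F' (w t) (w' t)) (at t within {0..})" if "t \<ge> 0" for t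
  proof -
    have "(w has_vector_derivative w' t) (at t within {0..})"
      unfolding w_def w'_def using \<xi>1[OF that] \<xi>2[OF that]
      by (auto intro: has_vector_derivative_diff)
    from vector_derivative_diff_chain_within[OF this has_derivative_at_withinI[OF F_der]]
    show ?thesis
      by (simp add: has_real_derivative_iff_has_vector_derivative)
  qed
  moreover have "c * (F \<circ> w) t \<le> F' (w t) (w' t)" if "t \<ge> 0" for t
  proof -
    have "norm (w' t - L (w t)) \<le> \<eta> * norm (w t)"
      using remainder \<xi>1[OF that] \<xi>2[OF that] by (simp add: w_def w'_def)
    from expanding[OF this] show ?thesis
      by simp
  qed
  moreover have "(F \<circ> w) t \<le> \<bar>K\<bar> * (diameter S)\<^sup>2" if "t \<ge> 0" for t
  proof -
    have "norm (w t) \<le> diameter S"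
      using diameter_bounded_bound[OF \<open>bounded S\<close>] \<xi>1[OF that] \<xi>2[OF that]
      by (simp add: w_def dist_norm)
    then have "(norm (w t))\<^sup>2 \<le> (diameter S)\<^sup>2"
      by (intro power_mono) simp_all
    have "F (w t) \<le> \<bar>K\<bar> * (norm (w t))\<^sup>2"
      using F_le[of "w t"] by (meson abs_ge_self mult_right_mono order_trans zero_le_power2)
    also have "\<dots> \<le> \<bar>K\<bar> * (diameter S)\<^sup>2"
      using \<open>(norm (w t))\<^sup>2 \<le> (diameter S)\<^sup>2\<close> by (rule mult_left_mono) simp
    finally show ?thesis
      by simp
  qed
  ultimately have "(F \<circ> w) 0 \<le> 0"
    by (rule nonpos_if_exponential_growth_bounded[OF _ _ \<open>c > 0\<close>])
  then show ?thesis
    by (simp add: w_def \<open>x = \<xi>1 0\<close> \<open>z = \<xi>2 0\<close>)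
qed

section \<open>Schur decomposition of Cartesian matrices\<close>

text \<open>Jordan_Normal_Form's vector indexing and matrix constructors clash with those of
  Finite_Cartesian_Product, which is the notation used from here on.\<close>

no_notation Matrix.vec_index (infixl \<open>$\<close> 100)
hide_const (open) Matrix.mat Matrix.vec
hide_fact (open) Matrix.vec_eq_iff

definition cart_of_mat :: "('n \<Rightarrow> nat) \<Rightarrow> 'a mat \<Rightarrow> 'a^'n^'n" where
  "cart_of_mat r X = (\<chi> i j. X $$ (r i, r j))"

definition mat_of_cart :: "('n::finite \<Rightarrow> nat) \<Rightarrow> 'a^'n^'n \<Rightarrow> 'a mat" where
  "mat_of_cart r M =
     Matrix.mat CARD('n) CARD('n) (\<lambda>(k, l). M $ (inv_into UNIV r k) $ (inv_into UNIV r l))"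

context
  fixes r :: "'n::finite \<Rightarrow> nat"
  assumes r: "bij_betw r UNIV {..<CARD('n)}"
begin

private lemma r_less [simp]: "r i < CARD('n)"
  using r by (auto simp: bij_betw_def)

private lemma r_eq_iff [simp]: "r i = r j \<longleftrightarrow> i = j"
  using r by (auto simp: bij_betw_def inj_eq)

private lemma sum_reindex: "(\<Sum>i\<in>UNIV. g (r i)) = (\<Sum>k<CARD('n). g k)"
  using sum.reindex_bij_betw[OF r] .

lemma cart_of_mat_mult:
  fixes X Y :: "'a::semiring_1 mat"
  assumes "X \<in> carrier_mat CARD('n) CARD('n)" "Y \<in> carrier_mat CARD('n) CARD('n)"
  shows "cart_of_mat r (X * Y) = cart_of_mat r X ** cart_of_mat r Y"
  using assms sum_reindex[of "\<lambda>k. X $$ (r _, k) * Y $$ (k, r _)"]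
  by (auto simp: cart_of_mat_def matrix_matrix_mult_def vec_eq_iff scalar_prod_def atLeast0LessThan)

lemma cart_of_mat_one: "cart_of_mat r (1\<^sub>m CARD('n)) = (mat 1 :: 'a::semiring_1^'n^'n)"
  by (auto simp: cart_of_mat_def vec_eq_iff Finite_Cartesian_Product.mat_def)

lemma cart_of_mat_of_cart: "cart_of_mat r (mat_of_cart r M) = M"
  using r by (simp add: cart_of_mat_def mat_of_cart_def vec_eq_iff bij_betw_inv_into_left)

lemma eigenvalue_mat_of_cart:
  fixes M :: "'a::comm_ring_1^'n^'n"
  assumes "v \<noteq> 0" "M *v v = \<mu> *s v"
  shows "eigenvalue (mat_of_cart r M) \<mu>"
  unfolding eigenvalue_def eigenvector_def
proof (intro exI conjI)
  define u where "u = Matrix.vec CARD('n) (\<lambda>k. v $ (inv_into UNIV r k))"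
  show "u \<in> carrier_vec (dim_row (mat_of_cart r M))"
    by (simp add: u_def mat_of_cart_def)
  obtain i where "v $ i \<noteq> 0"
    using \<open>v \<noteq> 0\<close> by (auto simp: vec_eq_iff)
  then have "vec_index u (r i) \<noteq> 0"
    using r by (simp add: u_def bij_betw_inv_into_left)
  then show "u \<noteq> 0\<^sub>v (dim_row (mat_of_cart r M))"
    by (auto simp: mat_of_cart_def)
  have "vec_index (mat_of_cart r M *\<^sub>v u) k = \<mu> * vec_index u k" if "k < CARD('n)" for k
  proof -
    have "vec_index (mat_of_cart r M *\<^sub>v u) k
        = (\<Sum>l<CARD('n). M $ (inv_into UNIV r k) $ (inv_into UNIV r l) * v $ (inv_into UNIV r l))"
      using that by (simp add: mat_of_cart_def u_def scalar_prod_def atLeast0LessThan)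
    also have "\<dots> = (M *v v) $ (inv_into UNIV r k)"
      using r sum_reindex[of "\<lambda>l. M $ (inv_into UNIV r k) $ (inv_into UNIV r l) *
          v $ (inv_into UNIV r l)"]
      by (simp add: matrix_vector_mult_def bij_betw_inv_into_left)
    finally show ?thesis
      using that assms(2) by (simp add: u_def)
  qed
  then show "mat_of_cart r M *\<^sub>v u = \<mu> \<cdot>\<^sub>v u"
    by (intro eq_vecI) (simp_all add: mat_of_cart_def u_def)
qed

lemma cart_of_mat_upper_triangular:
  assumes "upper_triangular B" "B \<in> carrier_mat CARD('n) CARD('n)" "r j < r i"
  shows "cart_of_mat r B $ i $ j = 0"
  using assms by (simp add: cart_of_mat_def upper_triangularD)

lemma cart_of_mat_diag:
  assumes "B \<in> carrier_mat CARD('n) CARD('n)"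
  shows "cart_of_mat r B $ i $ i = diag_mat B ! r i"
  using assms by (simp add: cart_of_mat_def diag_mat_def)

lemma cart_of_mat_similar:
  fixes A B P Q :: "'a::semiring_1 mat"
  assumes "similar_mat_wit A B P Q" "A \<in> carrier_mat CARD('n) CARD('n)"
  shows "cart_of_mat r P ** cart_of_mat r Q = mat 1" "cart_of_mat r Q ** cart_of_mat r P = mat 1"
    and "cart_of_mat r Q ** cart_of_mat r A = cart_of_mat r B ** cart_of_mat r Q"
proof -
  define n where "n = CARD('n)"
  have carrier: "B \<in> carrier_mat n n" "P \<in> carrier_mat n n" "Q \<in> carrier_mat n n"
    and "P * Q = 1\<^sub>m n" "Q * P = 1\<^sub>m n" "A = P * B * Q"
    using assms by (auto simp: similar_mat_wit_def Let_def n_def)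
  then show "cart_of_mat r P ** cart_of_mat r Q = mat 1"
    and "cart_of_mat r Q ** cart_of_mat r P = mat 1"
    by (simp_all add: n_def cart_of_mat_one flip: cart_of_mat_mult)
  have "Q * A = (Q * P) * (B * Q)"
    using carrier unfolding \<open>A = P * B * Q\<close>
    by (simp add: assoc_mult_mat[of P n n B n Q n] assoc_mult_mat[of Q n n P n "B * Q" n])
  then have "Q * A = B * Q"
    using carrier \<open>Q * P = 1\<^sub>m n\<close> by simp
  then show "cart_of_mat r Q ** cart_of_mat r A = cart_of_mat r B ** cart_of_mat r Q"
    using carrier assms(2) by (simp add: n_def flip: cart_of_mat_mult)
qed

end


lemma schur_decomposition_sorted:
  fixes A :: "complex mat"
  assumes A: "A \<in> carrier_mat n n"
  obtains B P Q where "similar_mat_wit A B P Q" "upper_triangular B"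
    "sorted (map (\<lambda>a. - Re a) (diag_mat B))" "\<And>\<mu>. eigenvalue A \<mu> \<Longrightarrow> \<mu> \<in> set (diag_mat B)"
proof -
  obtain as where "char_poly A = (\<Prod>a\<leftarrow>as. [:- a, 1:])"
    using char_poly_factorized[OF A] by blast
  define es where "es = sort_key (\<lambda>a. - Re a) as"
  have char_poly: "char_poly A = (\<Prod>a\<leftarrow>es. [:- a, 1:])"
    unfolding \<open>char_poly A = _\<close> es_def by (simp flip: prod_mset_prod_list)
  obtain B P Q where "schur_decomposition A es = (B, P, Q)"
    by (cases "schur_decomposition A es") auto
  from schur_decomposition[OF A char_poly this]
  have sim: "similar_mat_wit A B P Q" and "upper_triangular B" and diag: "diag_mat B = es"
    by auto
  from sim \<open>upper_triangular B\<close> show ?thesis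
  proof (rule that)
    show "sorted (map (\<lambda>a. - Re a) (diag_mat B))"
      by (simp add: diag es_def)
    show "\<mu> \<in> set (diag_mat B)" if "eigenvalue A \<mu>" for \<mu>
      using that eigenvalue_root_char_poly[OF A]
      by (auto simp: diag char_poly poly_prod_list_zero_iff)
  qed
qed

lemma schur_decomposition_cart:
  fixes M :: "complex^'n^'n"
  obtains P Q B :: "complex^'n^'n" and r :: "'n \<Rightarrow> nat"
  where "P ** Q = mat 1" "Q ** P = mat 1"
    "Q ** M = B ** Q" "inj r" "\<And>i j. r j < r i \<Longrightarrow> B $ i $ j = 0"
    "\<And>i j. r i \<le> r j \<Longrightarrow> Re (B $ j $ j) \<le> Re (B $ i $ i)"
    "\<And>\<mu> v. v \<noteq> 0 \<Longrightarrow> M *v v = \<mu> *s v \<Longrightarrow> \<exists>i. B $ i $ i = \<mu>"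
proof -
  obtain r :: "'n \<Rightarrow> nat" where r: "bij_betw r UNIV {..<CARD('n)}"
    using ex_bij_betw_finite_nat[of "UNIV :: 'n set"] by (auto simp: atLeast0LessThan)
  then have "inj r" and r_less: "r i < CARD('n)" for i
    by (auto simp: bij_betw_def)
  define A where "A = mat_of_cart r M"
  have A: "A \<in> carrier_mat CARD('n) CARD('n)"
    by (simp add: A_def mat_of_cart_def)
  obtain B' P' Q' where sim: "similar_mat_wit A B' P' Q'" and "upper_triangular B'"
    and sorted: "sorted (map (\<lambda>a. - Re a) (diag_mat B'))"
    and eigen: "\<And>\<mu>. eigenvalue A \<mu> \<Longrightarrow> \<mu> \<in> set (diag_mat B')"
    using schur_decomposition_sorted[OF A] by blast
  then have "B' \<in> carrier_mat CARD('n) CARD('n)"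
    using A by (simp add: similar_mat_wit_def Let_def)
  then have "length (diag_mat B') = CARD('n)"
    and diag: "\<And>i. cart_of_mat r B' $ i $ i = diag_mat B' ! r i"
    using cart_of_mat_diag[OF r, of B'] by (simp_all add: diag_mat_def)
  note similar = cart_of_mat_similar[OF r sim A]
  have "cart_of_mat r Q' ** M = cart_of_mat r B' ** cart_of_mat r Q'"
    using similar(3) by (simp add: A_def cart_of_mat_of_cart[OF r])
  then show ?thesis
  proof (rule that[OF similar(1,2) _ \<open>inj r\<close>])
    show "cart_of_mat r B' $ i $ j = 0" if "r j < r i" for i j
      using cart_of_mat_upper_triangular[OF r \<open>upper_triangular B'\<close> \<open>B' \<in> carrier_mat _ _\<close> that] .
    show "Re (cart_of_mat r B' $ j $ j) \<le> Re (cart_of_mat r B' $ i $ i)" if "r i \<le> r j" for i j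
      using sorted that r_less[of j] \<open>length (diag_mat B') = CARD('n)\<close>
      by (auto simp: diag sorted_iff_nth_mono)
    show "\<exists>i. cart_of_mat r B' $ i $ i = \<mu>" if "v \<noteq> 0" "M *v v = \<mu> *s v" for \<mu> v
    proof -
      have "\<mu> \<in> set (diag_mat B')"
        using eigen eigenvalue_mat_of_cart[OF r that] by (simp add: A_def)
      then obtain k where "k < CARD('n)" "diag_mat B' ! k = \<mu>"
        using \<open>length (diag_mat B') = CARD('n)\<close> by (auto simp: in_set_conv_nth)
      then have "cart_of_mat r B' $ (inv_into UNIV r k) $ (inv_into UNIV r k) = \<mu>"
        using r by (simp add: diag bij_betw_inv_into_right)
      then show ?thesis ..
    qed
  qed
qed

section \<open>Adapted coordinates\<close>

definition complexify :: "real^'n \<Rightarrow> complex^'n" where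
  "complexify x = (\<chi> i. complex_of_real (x $ i))"

definition complexify_matrix :: "real^'n^'m \<Rightarrow> complex^'n^'m" where
  "complexify_matrix A = (\<chi> i j. complex_of_real (A $ i $ j))"

lemma complexify_matrix_vector_mult [simp]:
  "complexify_matrix A *v complexify x = complexify (A *v x)"
  by (simp add: complexify_def complexify_matrix_def matrix_vector_mult_def vec_eq_iff)

lemma norm_complexify [simp]: "norm (complexify x) = norm x"
  by (simp add: complexify_def norm_vec_def)

lemma bounded_linear_complexify: "bounded_linear complexify"
proof (rule bounded_linear_intro[where K = 1])
  show "complexify (x + y) = complexify x + complexify y" for x y :: "real^'n"
    by (simp add: complexify_def vec_eq_iff)
  show "complexify (c *\<^sub>R x) = c *\<^sub>R complexify x" for c and x :: "real^'n"
    by (simp add: complexify_def vec_eq_iff complex_eq_iff)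
qed simp

lemma complex_eigenvalue_iff:
  "complex_eigenvalue L lam \<longleftrightarrow> (\<exists>v. v \<noteq> 0 \<and> complexify_matrix (matrix L) *v v = lam *s v)"
  by (simp add: complex_eigenvalue_def complexify_matrix_def matrix_vector_mult_def)

lemma upper_triangular_eigenvector_support:
  fixes B :: "'a::idom^'n^'n" and r :: "'n \<Rightarrow> nat"
  assumes "inj r" and upper: "\<And>i j. r j < r i \<Longrightarrow> B $ i $ j = 0"
    and eigen: "B *v z = \<nu> *s z" and "z $ i \<noteq> 0"
  obtains j where "r i \<le> r j" "B $ j $ j = \<nu>"
proof -
  have "r k < Suc (Max (range r))" for k
    by (simp add: le_imp_less_Suc)
  then obtain j where "z $ j \<noteq> 0" and j_max: "\<And>k. z $ k \<noteq> 0 \<Longrightarrow> r k \<le> r j"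
    using Lattices_Big.ex_has_greatest_nat[of "\<lambda>k. z $ k \<noteq> 0" i r] \<open>z $ i \<noteq> 0\<close> by blast
  have "B $ j $ k * z $ k = 0" if "k \<noteq> j" for k
  proof (cases "r k < r j")
    case False
    moreover have "r k \<noteq> r j"
      using \<open>inj r\<close> \<open>k \<noteq> j\<close> by (simp add: inj_eq)
    ultimately have "z $ k = 0"
      using j_max[of k] by linarith
    then show ?thesis
      by simp
  qed (simp add: upper)
  then have "(B *v z) $ j = B $ j $ j * z $ j"
    unfolding matrix_vector_mult_def by (simp add: sum.remove[of UNIV j] sum.neutral)
  then have "B $ j $ j = \<nu>"
    using eigen \<open>z $ j \<noteq> 0\<close> by (simp add: vec_eq_iff)
  then show ?thesis
    using that j_max[OF \<open>z $ i \<noteq> 0\<close>] by blast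
qed

lemma complexify_matrix_vector_mult_cnj:
  "complexify_matrix A *v (\<chi> i. cnj (v $ i)) = (\<chi> i. cnj ((complexify_matrix A *v v) $ i))"
  by (simp add: complexify_matrix_def matrix_vector_mult_def vec_eq_iff)

lemma leading_column_eigenvector:
  fixes M P Q B :: "complex^'n^'n" and r :: "'n \<Rightarrow> nat"
  assumes "P ** Q = mat 1" "Q ** P = mat 1" "Q ** M = B ** Q"
    and "inj r" and upper: "\<And>i j. r j < r i \<Longrightarrow> B $ i $ j = 0" and first: "\<And>i. r a \<le> r i"
  shows "M *v (P *v axis a 1) = B $ a $ a *s (P *v axis a 1)"
proof -
  have "B $ i $ a = 0" if "i \<noteq> a" for i
    using upper first[of i] \<open>inj r\<close> that by (metis inj_eq le_neq_implies_less)
  then have "B *v axis a 1 = B $ a $ a *s axis a 1"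
    by (auto simp: vec_eq_iff matrix_vector_mult_def axis_def if_distrib[of "\<lambda>x. _ * x"]
        cong: if_cong)
  moreover have "M = P ** B ** Q"
    by (metis assms(1,3) matrix_mul_assoc matrix_mul_lid)
  moreover have "Q *v (P *v x) = x" for x
    using assms(2) by (simp add: matrix_vector_mul_assoc)
  ultimately show ?thesis
    by (simp add: vector_scalar_commute flip: matrix_vector_mul_assoc)
qed

lemma triangular_coordinates_of_eigenvector:
  fixes M Q B :: "complex^'n^'n" and r :: "'n \<Rightarrow> nat"
  assumes "Q ** M = B ** Q" "inj r" "\<And>i j. r j < r i \<Longrightarrow> B $ i $ j = 0"
    and sorted: "\<And>i j. r i \<le> r j \<Longrightarrow> Re (B $ j $ j) \<le> Re (B $ i $ i)"
    and "M *v E = \<nu> *s E" "Re (B $ i $ i) < Re \<nu>"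
  shows "(Q *v E) $ i = 0"
proof (rule ccontr)
  have "B *v (Q *v E) = Q *v (M *v E)"
    using assms(1) by (simp add: matrix_vector_mul_assoc)
  also have "\<dots> = \<nu> *s (Q *v E)"
    using assms(5) by (simp add: vector_scalar_commute)
  moreover assume "(Q *v E) $ i \<noteq> 0"
  ultimately obtain j where "r i \<le> r j" "B $ j $ j = \<nu>"
    using upper_triangular_eigenvector_support[OF assms(2,3)] by metis
  then show False
    using sorted[of i j] assms(6) by simp
qed

lemma real_vector_with_leading_coordinate:
  fixes A :: "real^'n^'n" and P Q B :: "complex^'n^'n" and r :: "'n \<Rightarrow> nat"
  assumes PQ: "P ** Q = mat 1" and QP: "Q ** P = mat 1" and QA: "Q ** complexify_matrix A = B ** Q"
    and "inj r" and upper: "\<And>i j. r j < r i \<Longrightarrow> B $ i $ j = 0"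
    and sorted: "\<And>i j. r i \<le> r j \<Longrightarrow> Re (B $ j $ j) \<le> Re (B $ i $ i)"
    and first: "\<And>i. r a \<le> r i"
  obtains w where "(Q *v complexify w) $ a \<noteq> 0"
    and "\<And>i. Re (B $ i $ i) < Re (B $ a $ a) \<Longrightarrow> (Q *v complexify w) $ i = 0"
proof -
  txt \<open>The conjugate of the leading eigenvector E is an eigenvector for an eigenvalue with the
    same real part, so, like E, it has no coordinates below that real part; hence neither have
    the real vectors Re E and Im E.\<close>
  define e :: "complex^'n" where "e = axis a 1"
  define E where "E = P *v e"
  define E' where "E' = (\<chi> i. cnj (E $ i))"
  have "complexify_matrix A *v E = B $ a $ a *s E"
    unfolding E_def e_def using leading_column_eigenvector[OF PQ QP QA \<open>inj r\<close> upper first] .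
  then have "complexify_matrix A *v E' = cnj (B $ a $ a) *s E'"
    by (simp add: E'_def complexify_matrix_vector_mult_cnj vec_eq_iff)
  from triangular_coordinates_of_eigenvector[OF QA \<open>inj r\<close> upper sorted this]
  have zero: "e $ i = 0 \<and> (Q *v E') $ i = 0" if "Re (B $ i $ i) < Re (B $ a $ a)" for i
    using that by (auto simp: e_def axis_def)
  have "Q *v E = e"
    using QP by (simp add: E_def matrix_vector_mul_assoc)
  define w1 :: "real^'n" where "w1 = (\<chi> i. Re (E $ i))"
  define w2 :: "real^'n" where "w2 = (\<chi> i. Im (E $ i))"
  have "complexify w1 = (1/2) *s (E + E')" "complexify w2 = (- \<i>/2) *s (E - E')"
    by (simp_all add: complexify_def w1_def w2_def E'_def vec_eq_iff complex_eq_iff)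
  then have w1: "Q *v complexify w1 = (1/2) *s (e + Q *v E')"
    and w2: "Q *v complexify w2 = (- \<i>/2) *s (e - Q *v E')"
    by (simp_all add: vector_scalar_commute matrix_vector_right_distrib
        matrix_vector_mult_diff_distrib
        \<open>Q *v E = e\<close>)
  show ?thesis
  proof (cases "(Q *v E') $ a = -1")
    case True
    show ?thesis
      by (rule that[of w2]) (use True zero in \<open>simp_all add: w2 e_def\<close>)
  next
    case False
    show ?thesis
      by (rule that[of w1]) (use False zero in \<open>simp_all add: w1 e_def add_eq_0_iff\<close>)
  qed
qed

lemma similarity_rescaled:
  fixes s :: "'n::finite \<Rightarrow> 'a::field"
  assumes "\<And>i. s i \<noteq> 0" and PQ: "P ** Q = mat 1" and QM: "Q ** M = B ** Q"
  shows "(\<chi> i j. P $ i $ j * s j) ** (\<chi> i j. Q $ i $ j / s i) = mat 1"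
    and "(\<chi> i j. Q $ i $ j / s i) ** M = (\<chi> i j. B $ i $ j * s j / s i) ** (\<chi> i j. Q $ i $ j / s i)"
proof -
  have "((\<chi> i j. P $ i $ j * s j) ** (\<chi> i j. Q $ i $ j / s i)) $ i $ k = (P ** Q) $ i $ k" for i k
    using assms(1) by (simp add: matrix_matrix_mult_def)
  then show "(\<chi> i j. P $ i $ j * s j) ** (\<chi> i j. Q $ i $ j / s i) = mat 1"
    by (simp add: PQ vec_eq_iff)
  have "((\<chi> i j. Q $ i $ j / s i) ** M) $ i $ k = (Q ** M) $ i $ k / s i" for i k
    by (simp add: matrix_matrix_mult_def sum_divide_distrib)
  moreover have "((\<chi> i j. B $ i $ j * s j / s i) ** (\<chi> i j. Q $ i $ j / s i)) $ i $ k
      = (B ** Q) $ i $ k / s i"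
    for i k
    using assms(1) by (simp add: matrix_matrix_mult_def sum_divide_distrib)
  ultimately show
    "(\<chi> i j. Q $ i $ j / s i) ** M = (\<chi> i j. B $ i $ j * s j / s i) ** (\<chi> i j. Q $ i $ j / s i)"
    by (simp add: QM vec_eq_iff)
qed

lemma upper_triangular_rescaling:
  fixes B :: "complex^'n^'n" and r :: "'n \<Rightarrow> nat"
  assumes "inj r" and upper: "\<And>i j. r j < r i \<Longrightarrow> B $ i $ j = 0" and "\<delta> > 0"
  obtains d :: real where "d > 0"
    "\<And>i j. i \<noteq> j \<Longrightarrow> cmod (B $ i $ j * complex_of_real d ^ r j / complex_of_real d ^ r i) \<le> \<delta>"
proof
  define d where "d = min 1 (\<delta> / (norm B + 1))"
  have "norm B + 1 > 0"
    by (simp add: add_nonneg_pos)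
  then show "0 < d"
    using \<open>\<delta> > 0\<close> by (simp add: d_def)
  have "norm B * d \<le> norm B * (\<delta> / (norm B + 1))"
    unfolding d_def by (intro mult_left_mono) simp_all
  also have "\<dots> \<le> \<delta>"
    using \<open>norm B + 1 > 0\<close> \<open>\<delta> > 0\<close> by (simp add: field_simps)
  finally have "norm B * d \<le> \<delta>" .
  fix i j :: 'n assume "i \<noteq> j"
  show "cmod (B $ i $ j * complex_of_real d ^ r j / complex_of_real d ^ r i) \<le> \<delta>"
  proof (cases "r i < r j")
    case True
    then have "complex_of_real d ^ r j / complex_of_real d ^ r i = complex_of_real d ^ (r j - r i)"
      using \<open>0 < d\<close> by (simp add: power_diff)
    then have "cmod (B $ i $ j * complex_of_real d ^ r j / complex_of_real d ^ r i)
        = cmod (B $ i $ j) * d ^ (r j - r i)"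
      using \<open>0 < d\<close> by (simp add: norm_mult norm_power flip: times_divide_eq_right)
    also have "\<dots> \<le> norm B * d"
    proof (rule mult_mono)
      show "cmod (B $ i $ j) \<le> norm B"
        by (rule order_trans[OF Finite_Cartesian_Product.norm_nth_le
              Finite_Cartesian_Product.norm_nth_le])
      show "d ^ (r j - r i) \<le> d"
        using power_decreasing[of 1 "r j - r i" d] True \<open>0 < d\<close> by (simp add: d_def)
    qed (use \<open>0 < d\<close> in auto)
    finally show ?thesis
      using \<open>norm B * d \<le> \<delta>\<close> by linarith
  next
    case False
    moreover have "r i \<noteq> r j"
      using \<open>inj r\<close> \<open>i \<noteq> j\<close> by (simp add: inj_eq)
    ultimately show ?thesis
      using \<open>\<delta> > 0\<close> upper by simp
  qed
qed

lemma triangular_similarity_small_off_diagonal: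
  fixes M B P0 Q0 :: "complex^'n^'n" and r :: "'n \<Rightarrow> nat"
  assumes "P0 ** Q0 = mat 1" "Q0 ** M = B ** Q0"
    and "inj r" "\<And>i j. r j < r i \<Longrightarrow> B $ i $ j = 0" "\<delta> > 0"
  obtains P Q T :: "complex^'n^'n"
  where "P ** Q = mat 1" "Q ** M = T ** Q" "\<And>i. T $ i $ i = B $ i $ i"
    "\<And>i j. i \<noteq> j \<Longrightarrow> cmod (T $ i $ j) \<le> \<delta>" "\<And>x i. (Q *v x) $ i = 0 \<longleftrightarrow> (Q0 *v x) $ i = 0"
proof -
  obtain d where "d > 0"
    and small: "\<And>i j. i \<noteq> j \<Longrightarrow>
      cmod (B $ i $ j * complex_of_real d ^ r j / complex_of_real d ^ r i) \<le> \<delta>"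
    using upper_triangular_rescaling[OF assms(3-5)] by blast
  define s where "s i = complex_of_real d ^ r i" for i
  have "s i \<noteq> 0" for i
    using \<open>0 < d\<close> by (simp add: s_def)
  define P where "P = (\<chi> i j. P0 $ i $ j * s j)"
  define Q where "Q = (\<chi> i j. Q0 $ i $ j / s i)"
  define T where "T = (\<chi> i j. B $ i $ j * s j / s i)"
  show ?thesis
  proof (rule that[of P Q T])
    show "P ** Q = mat 1" "Q ** M = T ** Q"
      using similarity_rescaled[OF \<open>\<And>i. s i \<noteq> 0\<close> assms(1,2)] by (simp_all add: P_def Q_def T_def)
    show "T $ i $ i = B $ i $ i" for i
      using \<open>s i \<noteq> 0\<close> by (simp add: T_def)
    show "cmod (T $ i $ j) \<le> \<delta>" if "i \<noteq> j" for i j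
      using small[OF that] by (simp add: T_def s_def)
    show "(Q *v x) $ i = 0 \<longleftrightarrow> (Q0 *v x) $ i = 0" for x i
      using \<open>s i \<noteq> 0\<close> by (simp add: Q_def matrix_vector_mult_def flip: sum_divide_distrib)
  qed
qed

lemma ex_gap_below:
  fixes X :: "real set"
  assumes "finite X" "b > 0"
  obtains \<beta> \<epsilon> where "0 \<le> \<beta>" "\<beta> < b" "\<epsilon> > 0" "\<And>x. x \<in> X \<Longrightarrow> \<epsilon> \<le> \<bar>x - \<beta>\<bar>"
proof -
  have "infinite {0..<b}"
    using \<open>b > 0\<close> by (simp add: infinite_Ico)
  then obtain \<beta> where "\<beta> \<in> {0..<b}" "\<beta> \<notin> X"
    using \<open>finite X\<close> by (metis finite_subset subsetI)
  define \<epsilon> where "\<epsilon> = Min (insert 1 ((\<lambda>x. \<bar>x - \<beta>\<bar>) ` X))"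
  have "\<epsilon> > 0"
    using \<open>finite X\<close> \<open>\<beta> \<notin> X\<close> by (auto simp: \<epsilon>_def)
  moreover have "\<epsilon> \<le> \<bar>x - \<beta>\<bar>" if "x \<in> X" for x
    using \<open>finite X\<close> that by (simp add: \<epsilon>_def)
  ultimately show ?thesis
    using \<open>\<beta> \<in> {0..<b}\<close> by (intro that[of \<beta> \<epsilon>]) auto
qed

definition adapted_coordinates ::
    "real^'n^'n \<Rightarrow> real \<Rightarrow> real \<Rightarrow> real \<Rightarrow> complex^'n^'n \<Rightarrow> complex^'n^'n \<Rightarrow> complex^'n^'n \<Rightarrow> bool" where
  "adapted_coordinates A \<beta> \<epsilon> \<delta> P Q T \<longleftrightarrow>
     P ** Q = mat 1 \<and> Q ** complexify_matrix A = T ** Q \<and>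
     (\<forall>i. \<epsilon> \<le> \<bar>Re (T $ i $ i) - \<beta>\<bar>) \<and> (\<forall>i j. i \<noteq> j \<longrightarrow> cmod (T $ i $ j) \<le> \<delta>)"

lemma ex_adapted_coordinates:
  fixes A :: "real^'n^'n"
  assumes "v \<noteq> 0" "complexify_matrix A *v v = lam *s v" "Re lam > 0" "\<kappa> > 0"
  obtains \<beta> \<epsilon> :: real and P Q T :: "complex^'n^'n" and w :: "real^'n" and a :: 'n
  where "0 \<le> \<beta>" "0 < \<epsilon>" "adapted_coordinates A \<beta> \<epsilon> (\<kappa> * \<epsilon>) P Q T"
    "\<And>i. Re (T $ i $ i) < \<beta> \<Longrightarrow> (Q *v complexify w) $ i = 0"
    "\<beta> < Re (T $ a $ a)" "(Q *v complexify w) $ a \<noteq> 0"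
proof -
  obtain P0 Q0 B :: "complex^'n^'n" and r :: "'n \<Rightarrow> nat"
    where PQ0: "P0 ** Q0 = mat 1" "Q0 ** P0 = mat 1" "Q0 ** complexify_matrix A = B ** Q0"
      and "inj r" and upper: "\<And>i j. r j < r i \<Longrightarrow> B $ i $ j = 0"
      and sorted: "\<And>i j. r i \<le> r j \<Longrightarrow> Re (B $ j $ j) \<le> Re (B $ i $ i)"
      and eigen: "\<And>\<mu> v. v \<noteq> 0 \<Longrightarrow> complexify_matrix A *v v = \<mu> *s v \<Longrightarrow> \<exists>i. B $ i $ i = \<mu>"
    by (rule schur_decomposition_cart[of "complexify_matrix A"]) blast
  define a where "a = arg_min_on r UNIV"
  have first: "r a \<le> r i" for i
    using arg_min_if_finite(2)[of UNIV r] by (auto simp: a_def not_less)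
  obtain k where "B $ k $ k = lam"
    using eigen assms(1,2) by blast
  then have "Re lam \<le> Re (B $ a $ a)"
    using sorted first by blast
  have "finite (range (\<lambda>i. Re (B $ i $ i)))"
    by simp
  then obtain \<beta> \<epsilon> where "0 \<le> \<beta>" "\<beta> < Re lam" "0 < \<epsilon>"
    and gap: "\<And>x. x \<in> range (\<lambda>i. Re (B $ i $ i)) \<Longrightarrow> \<epsilon> \<le> \<bar>x - \<beta>\<bar>"
    using ex_gap_below[OF _ \<open>Re lam > 0\<close>] by blast
  obtain w where w_lead: "(Q0 *v complexify w) $ a \<noteq> 0"
    and w_zero: "\<And>i. Re (B $ i $ i) < Re (B $ a $ a) \<Longrightarrow> (Q0 *v complexify w) $ i = 0"
    using real_vector_with_leading_coordinate[OF PQ0 \<open>inj r\<close> upper sorted first] by blast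
  obtain P Q T :: "complex^'n^'n"
    where "P ** Q = mat 1" "Q ** complexify_matrix A = T ** Q" and diag: "\<And>i. T $ i $ i = B $ i $ i"
      and "\<And>i j. i \<noteq> j \<Longrightarrow> cmod (T $ i $ j) \<le> \<kappa> * \<epsilon>"
      and zero_iff: "\<And>x i. (Q *v x) $ i = 0 \<longleftrightarrow> (Q0 *v x) $ i = 0"
    using triangular_similarity_small_off_diagonal[OF PQ0(1,3) \<open>inj r\<close> upper, of "\<kappa> * \<epsilon>"]
      \<open>\<kappa> > 0\<close> \<open>0 < \<epsilon>\<close> by (metis mult_pos_pos)
  show ?thesis
  proof (rule that[of \<beta> \<epsilon> P Q T w a])
    show "adapted_coordinates A \<beta> \<epsilon> (\<kappa> * \<epsilon>) P Q T"
      unfolding adapted_coordinates_def using gap by (simp add: diag \<open>P ** Q = mat 1\<close>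
          \<open>Q ** complexify_matrix A = T ** Q\<close> \<open>\<And>i j. i \<noteq> j \<Longrightarrow> cmod (T $ i $ j) \<le> \<kappa> * \<epsilon>\<close>)
    show "(Q *v complexify w) $ i = 0" if "Re (T $ i $ i) < \<beta>" for i
      using that diag w_zero zero_iff \<open>\<beta> < Re lam\<close> \<open>Re lam \<le> Re (B $ a $ a)\<close> by simp
    show "\<beta> < Re (T $ a $ a)"
      using diag \<open>\<beta> < Re lam\<close> \<open>Re lam \<le> Re (B $ a $ a)\<close> by simp
    show "(Q *v complexify w) $ a \<noteq> 0"
      using zero_iff w_lead by simp
  qed fact+
qed

section \<open>An expanding quadratic form\<close>

definition signed_square_sum :: "('n \<Rightarrow> real) \<Rightarrow> complex^'n^'n \<Rightarrow> real^'n \<Rightarrow> real" where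
  "signed_square_sum s Q w = (\<Sum>i\<in>UNIV. s i * (cmod ((Q *v complexify w) $ i))\<^sup>2)"

lemma bounded_linear_coordinate_complexify: "bounded_linear (\<lambda>w. (Q *v complexify w) $ i)"
  by (intro bounded_linear_compose[OF bounded_linear_vec_nth]
      bounded_linear_compose[OF matrix_vector_mul_bounded_linear] bounded_linear_complexify)

lemma has_derivative_signed_square_sum:
  "(signed_square_sum s Q has_derivative
     (\<lambda>h. \<Sum>i\<in>UNIV. s i * (2 * inner ((Q *v complexify w) $ i) ((Q *v complexify h) $ i)))) (at w)"
proof -
  note coord = bounded_linear.has_derivative[OF bounded_linear_coordinate_complexify]
  have "signed_square_sum s Q =
      (\<lambda>w. \<Sum>i\<in>UNIV. s i * inner ((Q *v complexify w) $ i) ((Q *v complexify w) $ i))"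
    by (simp add: fun_eq_iff signed_square_sum_def power2_norm_eq_inner)
  moreover have
    "((\<lambda>w. \<Sum>i\<in>UNIV. s i * inner ((Q *v complexify w) $ i) ((Q *v complexify w) $ i)) has_derivative
     (\<lambda>h. \<Sum>i\<in>UNIV. s i * (2 * inner ((Q *v complexify w) $ i) ((Q *v complexify h) $ i)))) (at w)"
    by (auto intro!: derivative_eq_intros coord simp: inner_commute)
  ultimately show ?thesis
    by simp
qed

lemma signed_square_sum_scaleR: "signed_square_sum s Q (t *\<^sub>R w) = t\<^sup>2 * signed_square_sum s Q w"
proof -
  have "(Q *v complexify (t *\<^sub>R w)) $ i = t *\<^sub>R (Q *v complexify w) $ i" for i
    by (rule linear_cmul[OF bounded_linear.linear[OF bounded_linear_coordinate_complexify]])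
  then show ?thesis
    by (simp add: signed_square_sum_def sum_distrib_left power_mult_distrib algebra_simps)
qed

lemma signed_square_sum_le:
  assumes "\<And>i. s i \<le> 1"
  obtains K where "\<And>w. signed_square_sum s Q w \<le> K * (norm w)\<^sup>2"
proof -
  obtain K where K: "\<And>x. norm (Q *v x) \<le> norm x * K"
    using bounded_linear.bounded[OF matrix_vector_mul_bounded_linear] by blast
  have "signed_square_sum s Q w \<le> (\<Sum>i\<in>UNIV. (cmod ((Q *v complexify w) $ i))\<^sup>2)" for w
    unfolding signed_square_sum_def using mult_right_mono[OF assms zero_le_power2]
    by (intro sum_mono) simp
  also have "\<dots> w = (norm (Q *v complexify w))\<^sup>2" for w
    by (simp add: norm_vec_def L2_set_def sum_nonneg)
  also have "\<dots> w \<le> K\<^sup>2 * (norm w)\<^sup>2" for w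
    using K[of "complexify w"] by (simp add: power_mult_distrib[symmetric] power_mono mult.commute)
  finally show ?thesis
    using that by blast
qed

lemma inner_mult_right_self: "inner (y :: complex) (c * y) = Re c * (cmod y)\<^sup>2"
  unfolding inner_complex_def cmod_power2 by (simp add: algebra_simps power2_eq_square)

lemma signed_coordinate_growth:
  fixes t y h :: complex and \<beta> \<epsilon> :: real
  assumes "\<epsilon> \<le> \<bar>Re t - \<beta>\<bar>"
  shows "2 * \<beta> * (sgn (Re t - \<beta>) * (cmod y)\<^sup>2) + 2 * \<epsilon> * (cmod y)\<^sup>2 - 2 * (cmod y * cmod h)
    \<le> sgn (Re t - \<beta>) * (2 * inner y (t * y + h))"
proof -
  define s where "s = sgn (Re t - \<beta>)"
  have "s * Re t = s * \<beta> + \<bar>Re t - \<beta>\<bar>"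
    by (simp add: s_def algebra_simps abs_sgn)
  then have "(s * \<beta> + \<epsilon>) * (cmod y)\<^sup>2 \<le> s * Re t * (cmod y)\<^sup>2"
    using assms by (intro mult_right_mono) auto
  moreover have "\<bar>s * inner y h\<bar> \<le> cmod y * cmod h"
    using Cauchy_Schwarz_ineq2[of y h] by (auto simp: s_def abs_mult sgn_if)
  ultimately have "2 * ((s * \<beta> + \<epsilon>) * (cmod y)\<^sup>2) - 2 * (cmod y * cmod h)
      \<le> 2 * (s * Re t * (cmod y)\<^sup>2) + 2 * (s * inner y h)"
    by linarith
  also have "\<dots> = s * (2 * inner y (t * y + h))"
    unfolding inner_add_right inner_mult_right_self by (simp add: algebra_simps)
  finally show ?thesis
    unfolding s_def[symmetric] by (simp add: algebra_simps)
qed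

lemma off_diagonal_row_bound:
  fixes T :: "complex^'n^'n"
  assumes "\<And>j. j \<noteq> i \<Longrightarrow> cmod (T $ i $ j) \<le> \<delta>" "\<delta> \<ge> 0"
  shows "cmod (\<Sum>j\<in>UNIV - {i}. T $ i $ j * y $ j) \<le> \<delta> * (\<Sum>j\<in>UNIV. cmod (y $ j))"
proof -
  have "cmod (\<Sum>j\<in>UNIV - {i}. T $ i $ j * y $ j) \<le> (\<Sum>j\<in>UNIV - {i}. \<delta> * cmod (y $ j))"
    by (rule order_trans[OF norm_sum sum_mono])
      (auto simp: norm_mult intro: mult_right_mono assms(1))
  also have "\<dots> \<le> \<delta> * (\<Sum>j\<in>UNIV. cmod (y $ j))"
    unfolding sum_distrib_left[symmetric] using assms(2) by (intro mult_left_mono sum_mono2) auto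
  finally show ?thesis .
qed

lemma sum_cmod_squared_le:
  fixes y :: "complex^'n"
  shows "(\<Sum>j\<in>UNIV. cmod (y $ j))\<^sup>2 \<le> CARD('n) * (\<Sum>j\<in>UNIV. (cmod (y $ j))\<^sup>2)"
  using Cauchy_Schwarz_ineq_sum[of "\<lambda>_. 1" "\<lambda>j. cmod (y $ j)" UNIV] by simp

lemma signed_growth_inequality:
  fixes T :: "complex^'n^'n" and y g :: "complex^'n" and \<beta> \<epsilon> \<delta> \<gamma> :: real
  defines "s i \<equiv> sgn (Re (T $ i $ i) - \<beta>)"
  assumes gap: "\<And>i. \<epsilon> \<le> \<bar>Re (T $ i $ i) - \<beta>\<bar>"
    and off: "\<And>i j. i \<noteq> j \<Longrightarrow> cmod (T $ i $ j) \<le> \<delta>"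
    and g: "\<And>i. cmod (g $ i) \<le> \<gamma> * (\<Sum>j\<in>UNIV. cmod (y $ j))"
    and small: "(\<delta> + \<gamma>) * CARD('n) \<le> \<epsilon> / 2" and "\<epsilon> > 0" "\<delta> \<ge> 0" "\<gamma> \<ge> 0"
  shows "(2 * \<beta> + \<epsilon>) * (\<Sum>i\<in>UNIV. s i * (cmod (y $ i))\<^sup>2)
    \<le> (\<Sum>i\<in>UNIV. s i * (2 * inner (y $ i) ((T *v y) $ i + g $ i)))"
proof -
  define S1 where "S1 = (\<Sum>j\<in>UNIV. cmod (y $ j))"
  define S2 where "S2 = (\<Sum>j\<in>UNIV. (cmod (y $ j))\<^sup>2)"
  define V where "V = (\<Sum>i\<in>UNIV. s i * (cmod (y $ i))\<^sup>2)"
  define h where "h i = (\<Sum>j\<in>UNIV - {i}. T $ i $ j * y $ j) + g $ i" for i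
  have Ty: "(T *v y) $ i + g $ i = T $ i $ i * y $ i + h i" for i
    by (simp add: matrix_vector_mult_def h_def sum.remove[of UNIV i])
  have h: "cmod (h i) \<le> (\<delta> + \<gamma>) * S1" for i
    using norm_triangle_ineq[of "\<Sum>j\<in>UNIV - {i}. T $ i $ j * y $ j" "g $ i"] g[of i]
      off_diagonal_row_bound[of i T \<delta> y] off \<open>\<delta> \<ge> 0\<close>
    by (simp add: h_def S1_def distrib_right)
  have "2 * \<beta> * (s i * (cmod (y $ i))\<^sup>2) + 2 * \<epsilon> * (cmod (y $ i))\<^sup>2 - 2 * (\<delta> + \<gamma>) * S1 * cmod (y $ i)
      \<le> s i * (2 * inner (y $ i) ((T *v y) $ i + g $ i))" for i
  proof -
    have "cmod (y $ i) * cmod (h i) \<le> cmod (y $ i) * ((\<delta> + \<gamma>) * S1)"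
      using h[of i] by (rule mult_left_mono) simp
    moreover have "2 * (\<delta> + \<gamma>) * S1 * cmod (y $ i) = 2 * (cmod (y $ i) * ((\<delta> + \<gamma>) * S1))"
      by simp
    ultimately show ?thesis
      using signed_coordinate_growth[OF gap[of i], of "y $ i" "h i"] unfolding Ty s_def by linarith
  qed
  from sum_mono[OF this]
  have "2 * \<beta> * V + 2 * \<epsilon> * S2 - 2 * (\<delta> + \<gamma>) * S1 * S1
      \<le> (\<Sum>i\<in>UNIV. s i * (2 * inner (y $ i) ((T *v y) $ i + g $ i)))"
    by (simp add: V_def S1_def S2_def sum.distrib sum_subtractf sum_distrib_left)
  moreover have "2 * (\<delta> + \<gamma>) * S1 * S1 \<le> \<epsilon> * S2"
  proof -
    have "S1 * S1 \<le> CARD('n) * S2"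
      using sum_cmod_squared_le[of y] by (simp add: S1_def S2_def power2_eq_square)
    then have "2 * (\<delta> + \<gamma>) * (S1 * S1) \<le> 2 * (\<delta> + \<gamma>) * (CARD('n) * S2)"
      using \<open>\<delta> \<ge> 0\<close> \<open>\<gamma> \<ge> 0\<close> by (intro mult_left_mono) auto
    also have "\<dots> = 2 * ((\<delta> + \<gamma>) * CARD('n)) * S2"
      by simp
    also have "\<dots> \<le> \<epsilon> * S2"
      using small by (intro mult_right_mono) (auto simp: S2_def intro: sum_nonneg)
    finally show ?thesis
      by (simp add: mult.assoc)
  qed
  moreover have "s i * (cmod (y $ i))\<^sup>2 \<le> (cmod (y $ i))\<^sup>2" for i
    using mult_right_mono[of "s i" 1 "(cmod (y $ i))\<^sup>2"] by (simp add: s_def sgn_if)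
  then have "\<epsilon> * V \<le> \<epsilon> * S2"
    using \<open>\<epsilon> > 0\<close> unfolding V_def S2_def by (intro mult_left_mono sum_mono) auto
  ultimately show ?thesis
    unfolding V_def[symmetric] by (simp add: algebra_simps)
qed

lemma norm_le_sum_cmod: "norm (y :: complex^'n) \<le> (\<Sum>j\<in>UNIV. cmod (y $ j))"
  unfolding norm_vec_def by (rule L2_set_le_sum) simp

lemma signed_square_sum_growth:
  fixes A :: "real^'n^'n" and P Q T :: "complex^'n^'n" and \<beta> \<epsilon> \<delta> \<eta> Kp Kq :: real
  defines "s i \<equiv> sgn (Re (T $ i $ i) - \<beta>)"
  assumes adapted: "adapted_coordinates A \<beta> \<epsilon> \<delta> P Q T"
    and Kp: "\<And>x. norm (P *v x) \<le> norm x * Kp" and Kq: "\<And>x. norm (Q *v x) \<le> norm x * Kq"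
    and small: "(\<delta> + \<eta> * Kq * Kp) * CARD('n) \<le> \<epsilon> / 2"
    and "\<epsilon> > 0" "\<delta> \<ge> 0" "\<eta> \<ge> 0" "Kq \<ge> 0" "Kp \<ge> 0"
    and "norm \<rho> \<le> \<eta> * norm w"
  shows "(2 * \<beta> + \<epsilon>) * signed_square_sum s Q w
    \<le> (\<Sum>i\<in>UNIV. s i * (2 * inner ((Q *v complexify w) $ i) ((Q *v complexify (A *v w + \<rho>)) $ i)))"
proof -
  have PQ: "P ** Q = mat 1" and QA: "Q ** complexify_matrix A = T ** Q"
    and gap: "\<And>i. \<epsilon> \<le> \<bar>Re (T $ i $ i) - \<beta>\<bar>" and off: "\<And>i j. i \<noteq> j \<Longrightarrow> cmod (T $ i $ j) \<le> \<delta>"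
    using adapted by (auto simp: adapted_coordinates_def)
  define y where "y = Q *v complexify w"
  define g where "g = Q *v complexify \<rho>"
  have "Q *v complexify (A *v w + \<rho>) = T *v y + g"
    by (simp add: y_def g_def matrix_vector_mul_assoc QA
        linear_add[OF bounded_linear.linear[OF bounded_linear_complexify]]
        matrix_vector_right_distrib flip: complexify_matrix_vector_mult)
  moreover have "cmod (g $ i) \<le> (\<eta> * Kq * Kp) * (\<Sum>j\<in>UNIV. cmod (y $ j))" for i
  proof -
    have "norm w = norm (P *v y)"
      using PQ by (simp add: y_def matrix_vector_mul_assoc)
    also have "\<dots> \<le> Kp * (\<Sum>j\<in>UNIV. cmod (y $ j))"
      using Kp[of y] norm_le_sum_cmod[of y] \<open>Kp \<ge> 0\<close>
      by (simp add: mult.commute mult_left_mono order_trans)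
    finally have "norm w \<le> Kp * (\<Sum>j\<in>UNIV. cmod (y $ j))" .
    have "cmod (g $ i) \<le> norm \<rho> * Kq"
      using Finite_Cartesian_Product.norm_nth_le[of g i] Kq[of "complexify \<rho>"] by (simp add: g_def)
    also have "\<dots> \<le> \<eta> * norm w * Kq"
      using \<open>norm \<rho> \<le> \<eta> * norm w\<close> \<open>Kq \<ge> 0\<close> by (rule mult_right_mono)
    also have "\<dots> \<le> \<eta> * (Kp * (\<Sum>j\<in>UNIV. cmod (y $ j))) * Kq"
      using \<open>norm w \<le> _\<close> \<open>\<eta> \<ge> 0\<close> \<open>Kq \<ge> 0\<close> by (intro mult_right_mono mult_left_mono)
    finally show ?thesis
      by (simp add: ac_simps)
  qed
  then have "(2 * \<beta> + \<epsilon>) * (\<Sum>i\<in>UNIV. s i * (cmod (y $ i))\<^sup>2)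
      \<le> (\<Sum>i\<in>UNIV. s i * (2 * inner (y $ i) ((T *v y) $ i + g $ i)))"
    unfolding s_def using gap off small \<open>\<epsilon> > 0\<close> \<open>\<delta> \<ge> 0\<close> \<open>\<eta> \<ge> 0\<close> \<open>Kq \<ge> 0\<close> \<open>Kp \<ge> 0\<close>
    by (intro signed_growth_inequality[where \<gamma> = "\<eta> * Kq * Kp"]) auto
  ultimately show ?thesis
    by (simp add: signed_square_sum_def y_def)
qed

lemma signed_square_sum_pos:
  assumes "\<And>i. s i < 0 \<Longrightarrow> (Q *v complexify w) $ i = 0" "s a > 0" "(Q *v complexify w) $ a \<noteq> 0"
  shows "signed_square_sum s Q w > 0"
proof -
  have "s a * (cmod ((Q *v complexify w) $ a))\<^sup>2 \<le> signed_square_sum s Q w"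
    unfolding signed_square_sum_def
  proof (rule member_le_sum)
    show "0 \<le> s i * (cmod ((Q *v complexify w) $ i))\<^sup>2" for i
      using assms(1)[of i] by (cases "s i < 0") auto
  qed simp_all
  moreover have "s a * (cmod ((Q *v complexify w) $ a))\<^sup>2 > 0"
    using assms(2,3) by simp
  ultimately show ?thesis
    by linarith
qed

lemma expanding_quadratic_form:
  fixes L :: "real^'n \<Rightarrow> real^'n"
  assumes "linear L" and "complex_eigenvalue L lam" and "Re lam > 0"
  obtains F :: "real^'n \<Rightarrow> real" and F' :: "real^'n \<Rightarrow> real^'n \<Rightarrow> real" and c \<eta> K :: real
    and v :: "real^'n"
  where "\<And>w. (F has_derivative F' w) (at w)" "\<And>t w. F (t *\<^sub>R w) = t\<^sup>2 * F w" "F v > 0"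
    "c > 0" "\<eta> > 0" "\<And>w. F w \<le> K * (norm w)\<^sup>2"
    "\<And>w \<rho>. norm \<rho> \<le> \<eta> * norm w \<Longrightarrow> c * F w \<le> F' w (L w + \<rho>)"
proof -
  define A where "A = matrix L"
  obtain v0 where v0: "v0 \<noteq> 0" "complexify_matrix A *v v0 = lam *s v0"
    using assms(2) by (auto simp: complex_eigenvalue_iff A_def)
  define N where "N = real CARD('n)"
  have "N > 0"
    by (simp add: N_def)
  then have "1 / (4 * N) > 0"
    by simp
  obtain \<beta> \<epsilon> and P Q T :: "complex^'n^'n" and w a
    where "0 \<le> \<beta>" "0 < \<epsilon>" and adapted: "adapted_coordinates A \<beta> \<epsilon> (1 / (4 * N) * \<epsilon>) P Q T"
      and w_zero: "\<And>i. Re (T $ i $ i) < \<beta> \<Longrightarrow> (Q *v complexify w) $ i = 0"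
      and "\<beta> < Re (T $ a $ a)" "(Q *v complexify w) $ a \<noteq> 0"
    using ex_adapted_coordinates[OF v0 \<open>Re lam > 0\<close> \<open>1 / (4 * N) > 0\<close>] by blast
  define s where "s = (\<lambda>i. sgn (Re (T $ i $ i) - \<beta>))"
  obtain Kp where Kp: "\<And>x. norm (P *v x) \<le> norm x * Kp" "Kp > 0"
    using bounded_linear.pos_bounded[OF matrix_vector_mul_bounded_linear] by blast
  obtain Kq where Kq: "\<And>x. norm (Q *v x) \<le> norm x * Kq" "Kq > 0"
    using bounded_linear.pos_bounded[OF matrix_vector_mul_bounded_linear] by blast
  define \<eta> where "\<eta> = \<epsilon> / (4 * N * Kq * Kp)"
  have "\<eta> > 0"
    using \<open>0 < \<epsilon>\<close> \<open>N > 0\<close> Kp Kq by (simp add: \<eta>_def)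
  have "\<eta> * Kq * Kp = \<epsilon> / (4 * N)"
    using Kp Kq by (simp add: \<eta>_def)
  then have small: "(1 / (4 * N) * \<epsilon> + \<eta> * Kq * Kp) * CARD('n) \<le> \<epsilon> / 2"
    using \<open>N > 0\<close> by (simp add: N_def field_simps)
  have "s i \<le> 1" for i
    by (simp add: s_def sgn_if)
  then obtain K where "\<And>w. signed_square_sum s Q w \<le> K * (norm w)\<^sup>2"
    using signed_square_sum_le[of s Q] by blast
  show ?thesis
  proof (rule that[OF has_derivative_signed_square_sum signed_square_sum_scaleR])
    show "signed_square_sum s Q w > 0"
      using w_zero \<open>\<beta> < Re (T $ a $ a)\<close> \<open>(Q *v complexify w) $ a \<noteq> 0\<close>
      by (intro signed_square_sum_pos) (auto simp: s_def sgn_if split: if_splits)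
    show "2 * \<beta> + \<epsilon> > 0"
      using \<open>0 \<le> \<beta>\<close> \<open>0 < \<epsilon>\<close> by simp
    show "(2 * \<beta> + \<epsilon>) * signed_square_sum s Q w'
        \<le> (\<Sum>i\<in>UNIV. s i *
              (2 * inner ((Q *v complexify w') $ i) ((Q *v complexify (L w' + \<rho>)) $ i)))"
      if "norm \<rho> \<le> \<eta> * norm w'" for w' \<rho>
      using signed_square_sum_growth[OF adapted Kp(1) Kq(1) small \<open>0 < \<epsilon>\<close> _ _ _ _ that]
        \<open>0 < \<epsilon>\<close> \<open>N > 0\<close> \<open>\<eta> > 0\<close> Kp Kq assms(1)
      by (simp add: s_def A_def matrix_works bounded_linear.linear)
  qed fact+
qed

section \<open>Negligibility of the trapped set\<close>

lemma negligible_trapped_initial_points: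
  fixes f :: "real^'n \<Rightarrow> real^'n" and f' :: "real^'n \<Rightarrow> (real^'n) \<Rightarrow>\<^sub>L (real^'n)"
  assumes "open U" "x0 \<in> U" and der: "\<And>x. x \<in> U \<Longrightarrow> (f has_derivative blinfun_apply (f' x)) (at x)"
    and "continuous_on U f'"
    and "complex_eigenvalue (blinfun_apply (f' x0)) lam" "Re lam > 0"
  obtains r where "r > 0" "ball x0 r \<subseteq> U" "negligible (trapped_initial_points f (ball x0 r))"
proof -
  obtain F F' c \<eta> K v
    where F_der: "\<And>w. (F has_derivative F' w) (at w)" and hom: "\<And>t w. F (t *\<^sub>R w) = t\<^sup>2 * F w"
      and "F v > 0" "c > 0" "\<eta> > 0" and F_le: "\<And>w. F w \<le> K * (norm w)\<^sup>2"
      and expanding: "\<And>w \<rho>. norm \<rho> \<le> \<eta> * norm w \<Longrightarrow> c * F w \<le> F' w (f' x0 w + \<rho>)"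
    by (rule expanding_quadratic_form[OF bounded_linear.linear[OF blinfun.bounded_linear_right]
          assms(5,6)]) blast
  have "continuous (at x0) f'"
    using \<open>continuous_on U f'\<close> \<open>open U\<close> \<open>x0 \<in> U\<close> by (simp add: continuous_on_eq_continuous_at)
  then obtain r0 where "r0 > 0" and r0: "\<And>x. dist x x0 < r0 \<Longrightarrow> dist (f' x) (f' x0) < \<eta>"
    using \<open>\<eta> > 0\<close> unfolding continuous_at_eps_delta by blast
  obtain r1 where "r1 > 0" "ball x0 r1 \<subseteq> U"
    using \<open>open U\<close> \<open>x0 \<in> U\<close> open_contains_ball by blast
  define r where "r = min r0 r1"
  have "r > 0" "ball x0 r \<subseteq> U"
    using \<open>r0 > 0\<close> \<open>r1 > 0\<close> \<open>ball x0 r1 \<subseteq> U\<close> by (auto simp: r_def)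
  have remainder: "norm (f x - f z - f' x0 (x - z)) \<le> \<eta> * norm (x - z)"
    if "x \<in> ball x0 r" "z \<in> ball x0 r" for x z
  proof (rule remainder_bound_if_derivative_close[OF convex_ball _ _ that])
    fix y assume "y \<in> ball x0 r"
    then show "(f has_derivative blinfun_apply (f' y)) (at y within ball x0 r)"
      using der \<open>ball x0 r \<subseteq> U\<close> by (blast intro: has_derivative_at_withinI)
    show "norm (f' y - f' x0) \<le> \<eta>"
      using r0[of y] \<open>y \<in> ball x0 r\<close> by (simp add: r_def dist_norm norm_minus_commute)
  qed
  have "negligible (trapped_initial_points f (ball x0 r))"
  proof (rule negligible_if_differences_nonpos)
    show "isCont F v"
      using F_der by (rule has_derivative_continuous)
    show "F (x - z) \<le> 0"
      if "x \<in> trapped_initial_points f (ball x0 r)" "z \<in> trapped_initial_points f (ball x0 r)"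
      for x z
      using trapped_initial_points_difference_nonpos[OF F_der expanding \<open>c > 0\<close> F_le remainder
          bounded_ball that] .
  qed fact+
  then show ?thesis
    using that \<open>r > 0\<close> \<open>ball x0 r \<subseteq> U\<close> by blast
qed

section \<open>Transfer to the manifold\<close>

lemma chart_inj_on: "is_chart M c \<Longrightarrow> inj_on (snd c) (fst c)"
  unfolding is_chart_def
  by (metis homeomorphic_imp_injective_map openin_subset topspace_subtopology_subset)

lemma transition_chart_image:
  assumes "is_chart M c1" "E \<subseteq> fst c1"
  shows "transition c1 c2 ` snd c1 ` E = snd c2 ` E"
proof -
  have "transition c1 c2 (snd c1 p) = snd c2 p" if "p \<in> E" for p
    using chart_inj_on[OF assms(1)] assms(2) that by (simp add: transition_def inv_into_f_f subsetD)
  then show ?thesis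
    by (simp add: image_image cong: image_cong)
qed

lemma smooth_on_imp_differentiable_on:
  assumes "smooth_on S g" "T \<subseteq> S"
  shows "g differentiable_on T"
proof (rule differentiable_at_imp_differentiable_on)
  fix x assume "x \<in> T"
  then have "iter_dd g [] differentiable (at x)"
    using assms unfolding smooth_on_def by blast
  then show "g differentiable (at x)"
    by simp
qed

lemma negligible_chart_image_transfer:
  assumes "is_chart M c1" "smooth_on (snd c1 ` (fst c1 \<inter> fst c2)) (transition c1 c2)"
    and "E \<subseteq> fst c1 \<inter> fst c2" "negligible (snd c1 ` E)"
  shows "negligible (snd c2 ` E)"
proof -
  have "transition c1 c2 differentiable_on snd c1 ` E"
    using assms(3) by (intro smooth_on_imp_differentiable_on[OF assms(2)]) auto
  from negligible_differentiable_image_negligible[OF order_refl assms(4) this]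
  show ?thesis
    using assms(3) by (simp add: transition_chart_image[OF assms(1)])
qed

lemma measure_zero_if_negligible_in_chart:
  assumes "mchart M A c" "a \<in> A" "is_chart M a" "E \<subseteq> fst c \<inter> fst a" "negligible (snd c ` E)"
  shows "measure_zero M A E"
  unfolding measure_zero_def
proof (intro allI impI)
  have "is_chart M c" "smooth_compat a c"
    using assms(1,2) by (simp_all add: mchart_def)
  then have "smooth_on (snd c ` (fst c \<inter> fst a)) (transition c a)"
    by (simp add: smooth_compat_def inf_commute)
  then have "negligible (snd a ` E)"
    by (rule negligible_chart_image_transfer[OF \<open>is_chart M c\<close> _ assms(4,5)])
  fix c' assume "mchart M A c'"
  then have "smooth_on (snd a ` (fst a \<inter> fst c')) (transition a c')"
    using assms(2) by (simp add: mchart_def smooth_compat_def)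
  moreover have "E \<inter> fst c' \<subseteq> fst a \<inter> fst c'"
    using assms(4) by blast
  moreover have "negligible (snd a ` (E \<inter> fst c'))"
    by (rule negligible_subset[OF \<open>negligible (snd a ` E)\<close>]) blast
  ultimately have "negligible (snd c' ` (E \<inter> fst c'))"
    by (rule negligible_chart_image_transfer[OF assms(3)])
  then show "snd c' ` (E \<inter> fst c') \<in> null_sets lebesgue"
    by (simp add: negligible_iff_null_sets)
qed

lemma openin_chart_preimage:
  assumes "is_chart M c" "open W"
  shows "openin M {p \<in> fst c. snd c p \<in> W}"
proof -
  have "continuous_map (subtopology M (fst c)) (top_of_set (snd c ` fst c)) (snd c)"
    using assms(1) homeomorphic_imp_continuous_map by (auto simp: is_chart_def)
  moreover have "openin (top_of_set (snd c ` fst c)) (snd c ` fst c \<inter> W)"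
    using assms(2) by (auto simp: openin_open_Int)
  ultimately have "openin (subtopology M (fst c))
      {p \<in> topspace (subtopology M (fst c)). snd c p \<in> snd c ` fst c \<inter> W}"
    by (rule openin_continuous_map_preimage)
  moreover have "topspace (subtopology M (fst c)) = fst c"
    using assms(1) openin_subset by (fastforce simp: is_chart_def)
  then have "{p \<in> topspace (subtopology M (fst c)). snd c p \<in> snd c ` fst c \<inter> W}
      = {p \<in> fst c. snd c p \<in> W}"
    by auto
  ultimately have "openin (subtopology M (fst c)) {p \<in> fst c. snd c p \<in> W}"
    by simp
  then show ?thesis
    using assms(1) openin_trans_full by (auto simp: is_chart_def)
qed

lemma negligible_trapped_initial_points_in_chart:
  assumes "C1_vector_field M A X" "mchart M A c" "p0 \<in> fst c"
    and "complex_eigenvalue (frechet_derivative (X c) (at (snd c p0))) lam" "Re lam > 0"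
  obtains r where "r > 0" "negligible (trapped_initial_points (X c) (ball (snd c p0) r))"
proof -
  have "C1_on (snd c ` fst c) (X c)"
    using assms(1,2) unfolding C1_vector_field_def by blast
  then obtain f'
    where der: "\<And>x. x \<in> snd c ` fst c \<Longrightarrow> (X c has_derivative blinfun_apply (f' x)) (at x)"
    and "continuous_on (snd c ` fst c) f'"
    by (auto simp: C1_on_def)
  moreover have "complex_eigenvalue (blinfun_apply (f' (snd c p0))) lam"
    using assms(3,4) frechet_derivative_at[OF der] by simp
  moreover have "open (snd c ` fst c)"
    using assms(2) by (simp add: mchart_def is_chart_def)
  ultimately show ?thesis
    using negligible_trapped_initial_points[OF _ imageI[OF assms(3)] der _ _ assms(5)] that by blast
qed

lemma chart_image_subset_trapped_initial_points:
  assumes "mchart M A c" "B \<subseteq> {p \<in> fst c. snd c p \<in> S}"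
  shows "snd c ` {p \<in> topspace M. \<exists>\<gamma>. integral_curve M A X \<gamma> {0..} \<and> \<gamma> 0 = p \<and> (\<forall>t\<ge>0. \<gamma> t \<in> B)}
    \<subseteq> trapped_initial_points (X c) S"
proof clarify
  fix \<gamma> assume curve: "integral_curve M A X \<gamma> {0..}" and "\<forall>t\<ge>0. \<gamma> t \<in> B"
  then have in_chart: "\<gamma> t \<in> fst c" "snd c (\<gamma> t) \<in> S" if "t \<ge> 0" for t
    using assms(2) that by auto
  have derivative: "\<forall>c. mchart M A c \<longrightarrow> (\<forall>t\<in>{0..}. \<gamma> t \<in> fst c \<longrightarrow>
      ((snd c \<circ> \<gamma>) has_vector_derivative X c (snd c (\<gamma> t))) (at t within {0..}))"
    using curve unfolding integral_curve_def by (rule conjunct2)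
  have "((snd c \<circ> \<gamma>) has_vector_derivative X c ((snd c \<circ> \<gamma>) t)) (at t within {0..})"
    if "t \<ge> 0" for t
    using derivative[rule_format, OF assms(1)] in_chart(1)[OF that] that by simp
  then show "snd c (\<gamma> 0) \<in> trapped_initial_points (X c) S"
    unfolding trapped_initial_points_def using in_chart(2)
    by (intro CollectI exI[of _ "snd c \<circ> \<gamma>"]) auto
qed

theorem lemmaA6:
  fixes M :: "'p topology" and A :: "('p, 'n::finite) chart set"
    and X :: "('p, 'n) chart \<Rightarrow> real^'n \<Rightarrow> real^'n" and p0 :: 'p
  assumes "smooth_manifold M A"
    and "C1_vector_field M A X"
    and "p0 \<in> topspace M"
    and "\<forall>c. mchart M A c \<longrightarrow> p0 \<in> fst c \<longrightarrow> X c (snd c p0) = 0"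
    and "\<exists>c lam. mchart M A c \<and> p0 \<in> fst c \<and> Re lam > 0 \<and>
           complex_eigenvalue (frechet_derivative (X c) (at (snd c p0))) lam"
  shows "\<exists>B. openin M B \<and> p0 \<in> B \<and>
           measure_zero M A {p \<in> topspace M. \<exists>\<gamma>. integral_curve M A X \<gamma> {0..} \<and>
              \<gamma> 0 = p \<and> (\<forall>t\<ge>0. \<gamma> t \<in> B)}"
proof -
  obtain c lam where c: "mchart M A c" "p0 \<in> fst c" and "Re lam > 0"
    and eigen: "complex_eigenvalue (frechet_derivative (X c) (at (snd c p0))) lam"
    using assms(5) by blast
  obtain a where "a \<in> A" "p0 \<in> fst a"
    using assms(1,3) by (auto simp: smooth_manifold_def)
  have "is_chart M c" "is_chart M a"
    using c(1) \<open>a \<in> A\<close> assms(1) by (auto simp: mchart_def smooth_manifold_def)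
  obtain r where "r > 0"
    and negligible: "negligible (trapped_initial_points (X c) (ball (snd c p0) r))"
    using negligible_trapped_initial_points_in_chart[OF assms(2) c eigen \<open>Re lam > 0\<close>] by blast
  define B where "B = {p \<in> fst c. snd c p \<in> ball (snd c p0) r} \<inter> fst a"
  have "openin M B"
    using openin_chart_preimage[OF \<open>is_chart M c\<close> open_ball] \<open>is_chart M a\<close>
    by (auto simp: B_def is_chart_def)
  moreover have "p0 \<in> B"
    using c(2) \<open>p0 \<in> fst a\<close> \<open>r > 0\<close> by (simp add: B_def)
  moreover have "measure_zero M A
      {p \<in> topspace M. \<exists>\<gamma>. integral_curve M A X \<gamma> {0..} \<and> \<gamma> 0 = p \<and> (\<forall>t\<ge>0. \<gamma> t \<in> B)}"
    using chart_image_subset_trapped_initial_points[OF c(1), of B] negligible_subset[OF negligible]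
    by (intro measure_zero_if_negligible_in_chart[OF c(1) \<open>a \<in> A\<close> \<open>is_chart M a\<close>])
      (force simp: B_def)+
  ultimately show ?thesis
    by blast
qed

end
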